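(* Let $c>0$, $\Delta_1,\dots,\Delta_K\in(0,1]$ and $T\ge K$. Let $\Psi_c\ge0$ be the unique solution $x\ge0$ of \[ \sum_{i=1}^K\Big(\mathbb{I}\{x\le\ln\Delta_i^{-1}\}e^{2x}+\mathbb{I}\{x>\ln\Delta_i^{-1}\}\frac{x-\ln\Delta_i^{-1}+c/2}{c\Delta_i^2/2}\Big)=T. \] Then an optimal solution of $\mathscr{P}_c(\{\max\{\Delta_i,e^{-\Psi_c}\}\}_{i=1}^K,T)$ is given by \[ x_i=\mathbb{I}\{\Psi_c\le\ln\Delta_i^{-1}\}e^{2\Psi_c}+\mathbb{I}\{\Psi_c>\ln\Delta_i^{-1}\}\frac{\Psi_c-\ln\Delta_i^{-1}+c/2}{c\Delta_i^2/2},\quad i=1,\dots,K. \]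
   Context: For $c>0$, $T\ge0$ and positive reals $D_1,\dots,D_K$, the program $\mathscr{P}_c(\{D_i\}_{i=1}^K,T)$ is: minimize $\sum_{i=1}^K\exp(-c x_iD_i^2)$ subject to $x_1+\dots+x_K=T$, $x_i\ge0$. The left-hand side of the defining equation of $\Psi_c$ is continuous and strictly increasing in $x\ge0$, equals $K$ at $x=0$, and tends to $\infty$, so $\Psi_c$ is well defined. *)

theory Defs
  imports Complex_Main
begin

text \<open>The program P_c({D_i}_{i=1..K}, T): minimize sum_i exp(-c x_i D_i^2)
  subject to sum_i x_i = T, x_i >= 0. Indices range over {1..K}; vectors are
  functions nat => real whose values outside {1..K} are irrelevant.\<close>

definition P_objective :: "real \<Rightarrow> nat \<Rightarrow> (nat \<Rightarrow> real) \<Rightarrow> (nat \<Rightarrow> real) \<Rightarrow> real" where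
  "P_objective c K D x = (\<Sum>i=1..K. exp (- c * x i * (D i)^2))"

definition P_feasible :: "nat \<Rightarrow> real \<Rightarrow> (nat \<Rightarrow> real) \<Rightarrow> bool" where
  "P_feasible K T x \<longleftrightarrow> (\<Sum>i=1..K. x i) = T \<and> (\<forall>i\<in>{1..K}. x i \<ge> 0)"

definition P_optimal :: "real \<Rightarrow> nat \<Rightarrow> (nat \<Rightarrow> real) \<Rightarrow> real \<Rightarrow> (nat \<Rightarrow> real) \<Rightarrow> bool" where
  "P_optimal c K D T x \<longleftrightarrow> P_feasible K T x \<and>
     (\<forall>y. P_feasible K T y \<longrightarrow> P_objective c K D x \<le> P_objective c K D y)"

definition psi_lhs :: "real \<Rightarrow> nat \<Rightarrow> (nat \<Rightarrow> real) \<Rightarrow> real \<Rightarrow> real" where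
  "psi_lhs c K \<Delta> x = (\<Sum>i=1..K.
      (if x \<le> ln (1 / \<Delta> i) then exp (2 * x)
       else (x - ln (1 / \<Delta> i) + c / 2) / (c * (\<Delta> i)^2 / 2)))"

end

theory Submission
  imports Defs
begin

text \<open>The objective is a sum of convex functions of the separate coordinates, so a feasible
  point at which all coordinates have the same marginal rate
  \<open>c D\<^sub>i\<^sup>2 exp (- c x\<^sub>i D\<^sub>i\<^sup>2)\<close> is a minimiser: summing the tangent-line inequalities, the
  linear terms cancel because every feasible point has the same coordinate sum.
  The allocation defined by \<open>\<Psi>\<close> is exactly the one where the marginal rate is
  \<open>c exp (- 2\<Psi> - c)\<close> for every arm, once \<open>D\<^sub>i\<close> is clipped from below at \<open>exp (-\<Psi>)\<close>.\<close>

lemma exp_ge_tangent: "exp a * (1 + (b - a)) \<le> exp (b :: real)"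
proof -
  have "exp a * (1 + (b - a)) \<le> exp a * exp (b - a)"
    by (rule mult_left_mono) (simp_all add: exp_ge_add_one_self)
  also have "\<dots> = exp b"
    by (simp flip: exp_add)
  finally show ?thesis .
qed

lemma P_optimal_if_equal_marginals:
  assumes feasible: "P_feasible K T x"
    and marginal: "\<And>i. i \<in> {1..K} \<Longrightarrow> c * (D i)^2 * exp (- c * x i * (D i)^2) = L"
  shows "P_optimal c K D T x"
proof -
  have "P_objective c K D x \<le> P_objective c K D y" if "P_feasible K T y" for y
  proof -
    have tangent: "exp (- c * x i * (D i)^2) - L * (y i - x i) \<le> exp (- c * y i * (D i)^2)"
      if "i \<in> {1..K}" for i
      using exp_ge_tangent[of "- c * x i * (D i)^2" "- c * y i * (D i)^2"]
      unfolding marginal[OF that, symmetric] by (simp add: algebra_simps)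
    have "(\<Sum>i=1..K. L * (y i - x i)) = 0"
      using feasible \<open>P_feasible K T y\<close>
      by (simp add: P_feasible_def sum_subtractf flip: sum_distrib_left)
    then have "P_objective c K D x = (\<Sum>i=1..K. exp (- c * x i * (D i)^2) - L * (y i - x i))"
      by (simp add: P_objective_def sum_subtractf)
    also have "\<dots> \<le> P_objective c K D y"
      unfolding P_objective_def by (rule sum_mono) (rule tangent)
    finally show ?thesis .
  qed
  then show ?thesis
    using feasible by (simp add: P_optimal_def)
qed

definition water_level_alloc :: "real \<Rightarrow> real \<Rightarrow> real \<Rightarrow> real" where
  "water_level_alloc c \<Psi> d =
     (if \<Psi> \<le> ln (1 / d) then exp (2 * \<Psi>) else (\<Psi> - ln (1 / d) + c / 2) / (c * d^2 / 2))"

lemma water_level_alloc_nonneg: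
  assumes "c > 0" "d > 0"
  shows "water_level_alloc c \<Psi> d \<ge> 0"
  using assms by (simp add: water_level_alloc_def)

lemma marginal_water_level_alloc:
  fixes c \<Psi> d :: real
  assumes c: "c > 0" and d: "d > 0"
  defines "D \<equiv> max d (exp (- \<Psi>))"
  shows "c * D^2 * exp (- c * water_level_alloc c \<Psi> d * D^2) = c * exp (- 2 * \<Psi> - c)"
proof (cases "\<Psi> \<le> ln (1 / d)")
  case True
  then have "ln d \<le> - \<Psi>"
    using d by (simp add: ln_div)
  then have "d \<le> exp (- \<Psi>)"
    using d by (metis exp_ln exp_le_cancel_iff)
  then have D2: "D^2 = exp (- 2 * \<Psi>)"
    by (simp add: D_def power2_eq_square flip: exp_add)
  have "water_level_alloc c \<Psi> d * D^2 = 1"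
    using True by (simp add: water_level_alloc_def D2 flip: exp_add)
  then show ?thesis
    by (simp add: D2 mult.assoc flip: exp_add)
next
  case False
  then have "- \<Psi> < ln d"
    using d by (simp add: ln_div)
  then have "exp (- \<Psi>) < d"
    using d by (metis exp_ln exp_less_cancel_iff)
  then have "D = d"
    by (simp add: D_def)
  moreover have "c * water_level_alloc c \<Psi> d * d^2 = 2 * \<Psi> + c + 2 * ln d"
    using False c d by (simp add: water_level_alloc_def ln_div field_simps)
  then have "exp (- c * water_level_alloc c \<Psi> d * d^2) = exp (- 2 * \<Psi> - c) * exp (- 2 * ln d)"
    by (simp flip: exp_add)
  moreover have "exp (- 2 * ln d) = d powr (- 2)"
    using d by (simp add: powr_def)
  then have "d^2 * exp (- 2 * ln d) = 1"
    using d by (simp add: powr_minus)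
  ultimately show ?thesis
    by (metis mult.assoc mult.left_commute mult.right_neutral)
qed

text \<open>The hypotheses \<open>\<Delta>\<^sub>i \<le> 1\<close>, \<open>T \<ge> K\<close> and \<open>\<Psi> \<ge> 0\<close> only serve the existence of \<open>\<Psi>\<close>;
  optimality holds for any solution of the defining equation.\<close>

theorem lemma4:
  fixes c T \<Psi> :: real and K :: nat and \<Delta> :: "nat \<Rightarrow> real"
  assumes "c > 0"
    and "\<forall>i\<in>{1..K}. 0 < \<Delta> i \<and> \<Delta> i \<le> 1"
    and "T \<ge> real K"
    and "\<Psi> \<ge> 0"
    and "psi_lhs c K \<Delta> \<Psi> = T"
  shows "P_optimal c K (\<lambda>i. max (\<Delta> i) (exp (- \<Psi>))) T
           (\<lambda>i. if \<Psi> \<le> ln (1 / \<Delta> i) then exp (2 * \<Psi>)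
                else (\<Psi> - ln (1 / \<Delta> i) + c / 2) / (c * (\<Delta> i)^2 / 2))"
proof -
  let ?x = "\<lambda>i. water_level_alloc c \<Psi> (\<Delta> i)"
  have "P_feasible K T ?x"
    using assms(1,2,5) water_level_alloc_nonneg
    by (auto simp: P_feasible_def psi_lhs_def water_level_alloc_def)
  then have "P_optimal c K (\<lambda>i. max (\<Delta> i) (exp (- \<Psi>))) T ?x"
    using assms(1,2) marginal_water_level_alloc by (blast intro: P_optimal_if_equal_marginals)
  then show ?thesis
    by (simp add: water_level_alloc_def)
qed

end
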